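(* For every program $P$, all terms $s,t$ and all $w\in P^*$, if $s\hookrightarrow_w t$ then $\langle s\rangle\leadsto_w\langle t\rangle$.
   Context: Fix a signature $\Sigma$ and a countably infinite set $X$ of variables disjoint from $\Sigma$; terms are elements of $T(\Sigma,X)$, goals are finite sequences $\langle s_1,\dots,s_n\rangle$ of terms, substitutions are maps $X\to T(\Sigma,X)$ moving finitely many variables, applied homomorphically to terms and elementwise to goals; $\mathit{Var}$ denotes the set of variables. A renaming is a substitution bijective on $X$; a variant is an image under a renaming; $\mathit{mgu}$ denotes a most general unifier. A program is a set of rules $(u,\bar v)$ with $u$ a term and $\bar v$ a goal. For a rule $r$: $\hookrightarrow_r=\{(u\theta,v\theta)\mid r=(u,\langle v\rangle),\ \mathit{Var}(v)\subseteq\mathit{Var}(u),\ \theta\text{ a substitution}\}$. For a goal $\bar s=\langle s_1,\dots,s_n\rangle$, $\bar s\leadsto_r\bar t$ iff for some $1\le i\le n$ and some variant $(u',\langle v_1,\dots,v_m\rangle)$ of $r$ variable-disjoint from $\bar s$, $s_i$ and $u'$ unify, $\eta=\mathit{mgu}(s_i,u')$, and $\bar t=\langle s_1,\dots,s_{i-1},v_1,\dots,v_m,s_{i+1},\dots,s_n\rangle\eta$. For $w=\langle r_1,\dots,r_n\rangle\in P^*$, $\hookrightarrow_w=\hookrightarrow_{r_1}\circ\cdots\circ\hookrightarrow_{r_n}$ and $\leadsto_w=\leadsto_{r_1}\circ\cdots\circ\leadsto_{r_n}$ (apply $r_1$ first), each being the identity relation when $w=\epsilon$. *)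

theory Defs
  imports "HOL-Library.Countable"
begin

datatype ('f, 'v) trm = Var 'v | Fun 'f "('f, 'v) trm list"

fun wf_trm :: "('f \<Rightarrow> nat) \<Rightarrow> ('f, 'v) trm \<Rightarrow> bool" where
  "wf_trm ar (Var x) = True"
| "wf_trm ar (Fun f ts) = (length ts = ar f \<and> (\<forall>t\<in>set ts. wf_trm ar t))"

fun vars :: "('f, 'v) trm \<Rightarrow> 'v set" where
  "vars (Var x) = {x}"
| "vars (Fun f ts) = (\<Union>t\<in>set ts. vars t)"

definition goal_vars :: "('f, 'v) trm list \<Rightarrow> 'v set" where
  "goal_vars ts = (\<Union>t\<in>set ts. vars t)"

fun subst :: "('v \<Rightarrow> ('f, 'v) trm) \<Rightarrow> ('f, 'v) trm \<Rightarrow> ('f, 'v) trm" where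
  "subst \<sigma> (Var x) = \<sigma> x"
| "subst \<sigma> (Fun f ts) = Fun f (map (subst \<sigma>) ts)"

definition is_subst :: "('f \<Rightarrow> nat) \<Rightarrow> ('v \<Rightarrow> ('f, 'v) trm) \<Rightarrow> bool" where
  "is_subst ar \<sigma> \<longleftrightarrow> finite {x. \<sigma> x \<noteq> Var x} \<and> (\<forall>x. wf_trm ar (\<sigma> x))"

definition is_renaming :: "('f \<Rightarrow> nat) \<Rightarrow> ('v \<Rightarrow> ('f, 'v) trm) \<Rightarrow> bool" where
  "is_renaming ar \<rho> \<longleftrightarrow> is_subst ar \<rho> \<and> (\<exists>\<pi>. bij \<pi> \<and> \<rho> = (\<lambda>x. Var (\<pi> x)))"

definition is_mgu :: "('f \<Rightarrow> nat) \<Rightarrow> ('v \<Rightarrow> ('f, 'v) trm) \<Rightarrow> ('f, 'v) trm \<Rightarrow> ('f, 'v) trm \<Rightarrow> bool" where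
  "is_mgu ar \<sigma> s t \<longleftrightarrow> is_subst ar \<sigma> \<and> subst \<sigma> s = subst \<sigma> t \<and>
     (\<forall>\<tau>. is_subst ar \<tau> \<and> subst \<tau> s = subst \<tau> t \<longrightarrow>
        (\<exists>\<delta>. is_subst ar \<delta> \<and> (\<forall>x. \<tau> x = subst \<delta> (\<sigma> x))))"

definition unifiable :: "('f \<Rightarrow> nat) \<Rightarrow> ('f, 'v) trm \<Rightarrow> ('f, 'v) trm \<Rightarrow> bool" where
  "unifiable ar s t \<longleftrightarrow> (\<exists>\<theta>. is_subst ar \<theta> \<and> subst \<theta> s = subst \<theta> t)"

type_synonym ('f, 'v) rule = "('f, 'v) trm \<times> ('f, 'v) trm list"

definition wf_rule :: "('f \<Rightarrow> nat) \<Rightarrow> ('f, 'v) rule \<Rightarrow> bool" where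
  "wf_rule ar r \<longleftrightarrow> wf_trm ar (fst r) \<and> (\<forall>v\<in>set (snd r). wf_trm ar v)"

definition hstep :: "('f \<Rightarrow> nat) \<Rightarrow> ('f, 'v) rule \<Rightarrow> (('f, 'v) trm \<times> ('f, 'v) trm) set" where
  "hstep ar r = {(subst \<theta> u, subst \<theta> v) | u v \<theta>.
      r = (u, [v]) \<and> vars v \<subseteq> vars u \<and> is_subst ar \<theta>}"

definition lstep :: "('f \<Rightarrow> nat) \<Rightarrow> ('f, 'v) rule \<Rightarrow> (('f, 'v) trm list \<times> ('f, 'v) trm list) set" where
  "lstep ar r = {(ss, ts) | ss ts. \<exists>i < length ss. \<exists>\<rho> \<eta>.
      is_renaming ar \<rho> \<and>
      (vars (subst \<rho> (fst r)) \<union> goal_vars (map (subst \<rho>) (snd r))) \<inter> goal_vars ss = {} \<and>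
      unifiable ar (ss ! i) (subst \<rho> (fst r)) \<and>
      is_mgu ar \<eta> (ss ! i) (subst \<rho> (fst r)) \<and>
      ts = map (subst \<eta>) (take i ss @ map (subst \<rho>) (snd r) @ drop (Suc i) ss)}"

text \<open>Composition along w = <r1,...,rn>, applying r1 first (O is diagrammatic composition).\<close>
fun hsteps :: "('f \<Rightarrow> nat) \<Rightarrow> ('f, 'v) rule list \<Rightarrow> (('f, 'v) trm \<times> ('f, 'v) trm) set" where
  "hsteps ar [] = Id"
| "hsteps ar (r # w) = hstep ar r O hsteps ar w"

fun lsteps :: "('f \<Rightarrow> nat) \<Rightarrow> ('f, 'v) rule list \<Rightarrow> (('f, 'v) trm list \<times> ('f, 'v) trm list) set" where
  "lsteps ar [] = Id"
| "lsteps ar (r # w) = lstep ar r O lsteps ar w"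

end

theory Submission
  imports Defs
begin

text \<open>A single step \<open>s \<hookrightarrow>\<^sub>r t\<close> with \<open>r = (u, \<langle>v\<rangle>)\<close> has the form
\<open>s = u\<theta>\<close>, \<open>t = v\<theta>\<close>. Rename \<open>u\<close> apart from \<open>s\<close> by a permutation \<open>\<pi>\<close> of the
variables; then \<open>\<theta> \<circ> \<pi>\<^sup>-\<^sup>1\<close>, restricted to the variables of the renamed head, matches it
onto \<open>s\<close> and fixes \<open>s\<close>, and a matcher of a pattern variable-disjoint from the term
is a most general unifier. The resolution step therefore yields exactly \<open>\<langle>v\<theta>\<rangle>\<close>, and
the lemma follows by induction on \<open>w\<close>.\<close>

lemma finite_vars: "finite (vars t)"
  by (induction t) auto

lemma subst_subst: "subst \<sigma> (subst \<tau> t) = subst (\<lambda>x. subst \<sigma> (\<tau> x)) t"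
  by (induction t) auto

lemma subst_cong: "(\<And>x. x \<in> vars t \<Longrightarrow> \<sigma> x = \<tau> x) \<Longrightarrow> subst \<sigma> t = subst \<tau> t"
  by (induction t) auto

lemma subst_eq_imp_eq_on_vars: "subst \<sigma> t = subst \<tau> t \<Longrightarrow> x \<in> vars t \<Longrightarrow> \<sigma> x = \<tau> x"
  by (induction t) auto

lemma subst_Var_id: "subst Var t = t"
  by (induction t) (auto simp: map_idI)

lemma vars_subst_Var: "vars (subst (\<lambda>x. Var (\<pi> x)) t) = \<pi> ` vars t"
  by (induction t) auto

lemma obtain_permutation_apart:
  fixes A S :: "'a set"
  assumes "infinite (UNIV :: 'a set)" and "finite A" and "finite S"
  obtains \<pi> T where "bij \<pi>" and "finite T" and "\<forall>x. x \<notin> T \<longrightarrow> \<pi> x = x"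
    and "\<pi> ` A \<inter> S = {}"
proof -
  have "\<exists>\<pi> T. bij \<pi> \<and> finite T \<and> (\<forall>x. x \<notin> T \<longrightarrow> \<pi> x = x) \<and> \<pi> ` A \<inter> S = {}"
    using \<open>finite A\<close>
  proof (induction A rule: finite_induct)
    case empty
    have "bij (id :: 'a \<Rightarrow> 'a)" and "\<forall>x. x \<notin> {} \<longrightarrow> id x = x" and "id ` {} \<inter> S = {}"
      by simp_all
    then show ?case
      using finite.emptyI by blast
  next
    case (insert a A)
    then obtain \<pi> T where \<pi>: "bij \<pi>" "finite T" "\<forall>x. x \<notin> T \<longrightarrow> \<pi> x = x" "\<pi> ` A \<inter> S = {}"
      by blast
    have "finite (S \<union> \<pi> ` A)"
      using assms(3) \<open>finite A\<close> by simp
    then obtain b where b: "b \<notin> S \<union> \<pi> ` A"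
      using ex_new_if_finite[OF assms(1)] by blast
    define \<tau> where "\<tau> = id(\<pi> a := b, b := \<pi> a)"
    have \<tau>_involutive: "\<tau> \<circ> \<tau> = id"
      by (simp add: \<tau>_def fun_eq_iff)
    then have "bij \<tau>"
      by (rule o_bij[OF _ \<tau>_involutive])
    then have "bij (\<tau> \<circ> \<pi>)"
      by (rule bij_comp[OF \<pi>(1)])
    moreover have "finite (insert (\<pi> a) (insert b T))"
      using \<pi>(2) by simp
    moreover have "\<forall>x. x \<notin> insert (\<pi> a) (insert b T) \<longrightarrow> (\<tau> \<circ> \<pi>) x = x"
      using \<pi>(3) by (simp add: \<tau>_def)
    moreover have "\<pi> x \<noteq> \<pi> a" if "x \<in> A" for x
      using that \<open>a \<notin> A\<close> bij_is_inj[OF \<pi>(1)] by (metis inj_eq)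
    then have "(\<tau> \<circ> \<pi>) ` insert a A \<inter> S = {}"
      using b \<pi>(4) by (auto simp: \<tau>_def)
    ultimately show ?case
      by blast
  qed
  then show thesis
    using that by blast
qed

lemma is_mgu_restricted_matcher:
  assumes wf: "\<forall>x\<in>vars l. wf_trm ar (\<theta> x)"
    and apart: "vars l \<inter> vars s = {}"
    and match: "subst \<theta> l = s"
  shows "is_mgu ar (\<lambda>x. if x \<in> vars l then \<theta> x else Var x) s l"
    (is "is_mgu ar ?\<eta> s l")
proof -
  have "{x. ?\<eta> x \<noteq> Var x} \<subseteq> vars l"
    by auto
  then have subst_\<eta>: "is_subst ar ?\<eta>"
    unfolding is_subst_def using finite_subset finite_vars wf by fastforce
  have \<eta>_l: "subst ?\<eta> l = s"
    unfolding match[symmetric] by (rule subst_cong) simp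
  have "subst ?\<eta> s = subst Var s"
    using apart by (intro subst_cong) auto
  then have \<eta>_s: "subst ?\<eta> s = s"
    by (simp only: subst_Var_id)
  have most_general: "\<tau> x = subst \<tau> (?\<eta> x)" if "subst \<tau> s = subst \<tau> l" for \<tau> x
  proof (cases "x \<in> vars l")
    case True
    have "subst \<tau> l = subst (\<lambda>x. subst \<tau> (?\<eta> x)) l"
      unfolding subst_subst[symmetric] \<eta>_l that ..
    then show ?thesis
      using True by (rule subst_eq_imp_eq_on_vars)
  qed simp
  show ?thesis
    unfolding is_mgu_def using subst_\<eta> \<eta>_l \<eta>_s most_general by metis
qed

lemma singleton_lstepI:
  assumes "is_renaming ar \<rho>"
    and "(vars (subst \<rho> u) \<union> goal_vars (map (subst \<rho>) vs)) \<inter> vars s = {}"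
    and "is_mgu ar \<eta> s (subst \<rho> u)"
  shows "([s], map (subst \<eta>) (map (subst \<rho>) vs)) \<in> lstep ar (u, vs)"
proof -
  have "unifiable ar s (subst \<rho> u)"
    using assms(3) by (auto simp: is_mgu_def unifiable_def)
  then show ?thesis
    using assms unfolding lstep_def by (fastforce simp: goal_vars_def)
qed

lemma hstep_imp_lstep:
  assumes "infinite (UNIV :: 'v set)"
    and "(s, t) \<in> hstep ar (r :: ('f, 'v) rule)"
  shows "([s], [t]) \<in> lstep ar r"
proof -
  obtain u v \<theta> where r: "r = (u, [v])" and v_u: "vars v \<subseteq> vars u" and \<theta>: "is_subst ar \<theta>"
    and s: "s = subst \<theta> u" and t: "t = subst \<theta> v"
    using assms(2) unfolding hstep_def by blast
  obtain \<pi> T where \<pi>: "bij \<pi>" "finite T" "\<forall>x. x \<notin> T \<longrightarrow> \<pi> x = x"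
    and apart: "\<pi> ` vars u \<inter> vars s = {}"
    using obtain_permutation_apart[OF assms(1) finite_vars finite_vars] .
  define \<rho> where "\<rho> = (\<lambda>x. Var (\<pi> x) :: ('f, 'v) trm)"
  define \<eta> where "\<eta> = (\<lambda>x. if x \<in> vars (subst \<rho> u) then \<theta> (inv \<pi> x) else Var x)"
  have inv_\<pi>: "inv \<pi> (\<pi> x) = x" for x
    using bij_is_inj[OF \<pi>(1)] by simp
  have vars_u': "vars (subst \<rho> u) = \<pi> ` vars u"
    unfolding \<rho>_def by (rule vars_subst_Var)
  have "{x. \<rho> x \<noteq> Var x} \<subseteq> T"
    using \<pi>(3) by (auto simp: \<rho>_def)
  then have renaming: "is_renaming ar \<rho>"
    using \<pi>(1,2) by (auto simp: is_renaming_def is_subst_def \<rho>_def intro: finite_subset)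
  have rule_apart: "(vars (subst \<rho> u) \<union> goal_vars (map (subst \<rho>) [v])) \<inter> vars s = {}"
    using apart v_u by (auto simp: \<rho>_def vars_subst_Var goal_vars_def)
  have "subst (\<lambda>x. \<theta> (inv \<pi> x)) (subst \<rho> u) = s"
    using s by (simp add: \<rho>_def subst_subst inv_\<pi>)
  then have mgu: "is_mgu ar \<eta> s (subst \<rho> u)"
    unfolding \<eta>_def using apart \<theta> vars_u'
    by (intro is_mgu_restricted_matcher) (auto simp: is_subst_def)
  have "subst \<eta> (subst \<rho> v) = subst (\<lambda>x. \<eta> (\<pi> x)) v"
    by (simp add: \<rho>_def subst_subst)
  also have "\<dots> = t"
    unfolding t using v_u by (intro subst_cong) (auto simp: \<eta>_def vars_u' inv_\<pi>)
  finally show ?thesis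
    using singleton_lstepI[OF renaming rule_apart mgu] r by simp
qed

lemma hsteps_imp_lsteps:
  assumes "infinite (UNIV :: 'v set)"
    and "(s, t) \<in> hsteps ar (w :: ('f, 'v) rule list)"
  shows "([s], [t]) \<in> lsteps ar w"
  using assms(2)
proof (induction w arbitrary: s)
  case (Cons r w)
  then obtain m where "(s, m) \<in> hstep ar r" and "(m, t) \<in> hsteps ar w"
    by auto
  then have "([s], [m]) \<in> lstep ar r" and "([m], [t]) \<in> lsteps ar w"
    using hstep_imp_lstep[OF assms(1)] Cons.IH by blast+
  then show ?case
    by auto
qed simp

theorem lemma8:
  fixes ar :: "'f \<Rightarrow> nat"
    and P :: "('f, 'v :: countable) rule set"
    and s t :: "('f, 'v) trm"
    and w :: "('f, 'v) rule list"
  assumes "infinite (UNIV :: 'v set)"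
    and "\<forall>r\<in>P. wf_rule ar r"
    and "wf_trm ar s" and "wf_trm ar t"
    and "set w \<subseteq> P"
    and "(s, t) \<in> hsteps ar w"
  shows "([s], [t]) \<in> lsteps ar w"
  using assms(1,6) by (rule hsteps_imp_lsteps)

end
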